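(* Every orientation of a chordal graph has at most one kernel.
   Context: A graph is chordal if it has no induced cycle of length $4$ or more. An orientation of a graph orients each edge in exactly one direction (not necessarily clique-acyclic). A kernel of a digraph $D=(V,A)$ is a set $S$ of pairwise non-adjacent vertices such that every $u\in V\setminus S$ has an arc $(u,v)\in A$ with $v\in S$. *)

theory Defs
  imports Main
begin

definition simple_graph :: "'a set \<Rightarrow> ('a \<Rightarrow> 'a \<Rightarrow> bool) \<Rightarrow> bool" where
  "simple_graph V E \<longleftrightarrow> finite V \<and> (\<forall>u v. E u v \<longrightarrow> u \<in> V \<and> v \<in> V)
     \<and> (\<forall>u v. E u v \<longrightarrow> E v u) \<and> (\<forall>v. \<not> E v v)"

definition induced_cycle :: "'a set \<Rightarrow> ('a \<Rightarrow> 'a \<Rightarrow> bool) \<Rightarrow> 'a list \<Rightarrow> bool" where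
  "induced_cycle V E cs \<longleftrightarrow> length cs \<ge> 3 \<and> distinct cs \<and> set cs \<subseteq> V \<and>
     (\<forall>i < length cs. \<forall>j < length cs.
        E (cs ! i) (cs ! j) \<longleftrightarrow> (j = (i + 1) mod length cs \<or> i = (j + 1) mod length cs))"

definition chordal :: "'a set \<Rightarrow> ('a \<Rightarrow> 'a \<Rightarrow> bool) \<Rightarrow> bool" where
  "chordal V E \<longleftrightarrow> (\<forall>cs. induced_cycle V E cs \<longrightarrow> length cs < 4)"

definition orientation :: "'a set \<Rightarrow> ('a \<Rightarrow> 'a \<Rightarrow> bool) \<Rightarrow> ('a \<Rightarrow> 'a \<Rightarrow> bool) \<Rightarrow> bool" where
  "orientation V E A \<longleftrightarrow> (\<forall>u v. A u v \<longrightarrow> E u v) \<and>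
     (\<forall>u v. E u v \<longrightarrow> (A u v \<longleftrightarrow> \<not> A v u))"

definition kernel :: "'a set \<Rightarrow> ('a \<Rightarrow> 'a \<Rightarrow> bool) \<Rightarrow> 'a set \<Rightarrow> bool" where
  "kernel V A S \<longleftrightarrow> S \<subseteq> V \<and> (\<forall>u\<in>S. \<forall>v\<in>S. \<not> A u v) \<and>
     (\<forall>u \<in> V - S. \<exists>v\<in>S. A u v)"

end

theory Submission
  imports Defs
begin

text \<open>If S and T are distinct kernels of an orientation, every vertex of their symmetric
  difference D has an out-neighbour in D, and every arc inside D goes between S - T and
  T - S. Hence D contains a directed cycle, and a shortest one is even, of length at least 4,
  and chordless (a chord would short-cut it), i.e. an induced cycle of length at least 4.\<close>

definition dicycle :: "('a \<Rightarrow> 'a \<Rightarrow> bool) \<Rightarrow> 'a list \<Rightarrow> bool" where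
  "dicycle R cs \<longleftrightarrow> cs \<noteq> [] \<and> distinct cs \<and>
     (\<forall>m < length cs. R (cs ! m) (cs ! (Suc m mod length cs)))"

lemma dicycle_arc:
  assumes "dicycle R cs" "m < length cs"
  shows "R (cs ! m) (cs ! (Suc m mod length cs))"
  using assms unfolding dicycle_def by blast

lemma walk_segment_dicycle:
  assumes walk: "\<And>k. R (f k) (f (Suc k))" and "i < j" "f i = f j" and "inj_on f {i..<j}"
  shows "dicycle R (map f [i..<j])"
  unfolding dicycle_def
proof (intro conjI allI impI)
  show "map f [i..<j] \<noteq> []" "distinct (map f [i..<j])"
    using assms by (simp_all add: distinct_map)
  fix m assume "m < length (map f [i..<j])"
  then have m: "m < j - i" by simp
  show "R (map f [i..<j] ! m) (map f [i..<j] ! (Suc m mod length (map f [i..<j])))"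
  proof (cases "Suc m < j - i")
    case True
    then show ?thesis using walk[of "i + m"] by simp
  next
    case False
    then have "Suc (i + m) = j" "Suc m = j - i" using m by linarith+
    then show ?thesis using walk[of "i + m"] m \<open>f i = f j\<close> \<open>i < j\<close> by simp
  qed
qed

lemma finite_out_closed_has_dicycle:
  assumes "finite D" "x \<in> D" and out: "\<forall>u\<in>D. \<exists>v\<in>D. R u v"
  shows "\<exists>cs. dicycle R cs \<and> set cs \<subseteq> D"
proof -
  obtain g where g: "\<And>u. u \<in> D \<Longrightarrow> g u \<in> D \<and> R u (g u)" using out by metis
  define f where "f k = (g ^^ k) x" for k
  have fD: "f k \<in> D" for k by (induction k) (auto simp: f_def \<open>x \<in> D\<close> g)
  have walk: "R (f k) (f (Suc k))" for k using g[OF fD] by (simp add: f_def)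
  have "\<not> inj f"
    using fD \<open>finite D\<close> by (metis finite_imageD finite_subset image_subsetI infinite_UNIV_nat)
  then have "\<exists>j i. i < j \<and> f i = f j"
    unfolding inj_def by (metis linorder_neqE_nat)
  then obtain j where "\<exists>i<j. f i = f j"
    and j_least: "\<And>j'. j' < j \<Longrightarrow> \<not> (\<exists>i<j'. f i = f j')"
    using exists_least_iff[of "\<lambda>j. \<exists>i<j. f i = f j"] by blast
  then obtain i where "i < j" "f i = f j" by blast
  have "inj_on f {i..<j}"
    by (rule inj_onI) (metis atLeastLessThan_iff j_least linorder_neqE_nat)
  then have "dicycle R (map f [i..<j])"
    using walk_segment_dicycle[of R f i j] walk \<open>i < j\<close> \<open>f i = f j\<close> by blast
  moreover have "set (map f [i..<j]) \<subseteq> D" using fD by auto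
  ultimately show ?thesis by blast
qed

lemma dicycle_shortcut:
  assumes cyc: "dicycle R cs" and n: "n = length cs" and "i < n" "j < n" "i \<noteq> j"
    and chord: "R (cs ! i) (cs ! j)" and not_next: "j \<noteq> Suc i mod n"
  shows "\<exists>cs'. dicycle R cs' \<and> set cs' \<subseteq> set cs \<and> length cs' < n"
proof -
  \<comment> \<open>walk along the cycle from j to i (d steps), then close it by the chord\<close>
  define d where "d = (i + n - j) mod n"
  define cs' where "cs' = take (Suc d) (rotate j cs)"
  have d_end: "(j + d) mod n = i"
  proof -
    have "(j + d) mod n = (j + (i + n - j)) mod n" unfolding d_def by (rule mod_add_right_eq)
    also have "j + (i + n - j) = i + n" using \<open>j < n\<close> by simp
    finally show ?thesis using \<open>i < n\<close> by simp
  qed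
  have "d \<noteq> n - 1"
  proof
    assume "d = n - 1"
    then have "i = (j + n - 1) mod n" using d_end \<open>i < n\<close> by simp
    then have "Suc i mod n = (j + n) mod n" using \<open>i < n\<close> by (simp add: mod_Suc_eq)
    then show False using not_next \<open>j < n\<close> by simp
  qed
  moreover have "d < n" using \<open>i < n\<close> by (simp add: d_def)
  ultimately have dn: "Suc d < n" by linarith
  have "0 < n" using \<open>i < n\<close> by simp
  have len: "length cs' = Suc d" using dn n by (simp add: cs'_def)
  have nth: "\<And>m. m < Suc d \<Longrightarrow> cs' ! m = cs ! ((j + m) mod n)"
    using dn n by (simp add: cs'_def nth_rotate)
  have "dicycle R cs'"
    unfolding dicycle_def
  proof (intro conjI allI impI)
    show "cs' \<noteq> []" "distinct cs'"
      using len cyc by (auto simp: cs'_def dicycle_def)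
    fix m assume m: "m < length cs'"
    show "R (cs' ! m) (cs' ! (Suc m mod length cs'))"
    proof (cases "Suc m < Suc d")
      case True
      have "R (cs ! ((j + m) mod n)) (cs ! (Suc ((j + m) mod n) mod n))"
        using dicycle_arc[OF cyc, of "(j + m) mod n"] n \<open>0 < n\<close> by simp
      then show ?thesis using True nth len m by (simp add: mod_Suc_eq)
    next
      case False
      then have "m = d" using m len by simp
      then show ?thesis using chord nth[of 0] nth[of d] d_end len \<open>j < n\<close> by simp
    qed
  qed
  moreover have "set cs' \<subseteq> set cs" by (metis cs'_def set_rotate set_take_subset)
  ultimately show ?thesis using len dn by metis
qed

lemma dicycle_alternating_even:
  assumes cyc: "dicycle R cs" and alt: "\<And>u v. u \<in> set cs \<Longrightarrow> v \<in> set cs \<Longrightarrow> R u v \<Longrightarrow> P u \<longleftrightarrow> \<not> P v"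
  shows "even (length cs)"
proof -
  let ?n = "length cs"
  have n: "?n > 0" using cyc by (simp add: dicycle_def)
  have arc: "P (cs ! m) \<longleftrightarrow> \<not> P (cs ! Suc m)" if "Suc m < ?n" for m
    using alt dicycle_arc[OF cyc, of m] that by simp
  have parity: "P (cs ! m) \<longleftrightarrow> (P (cs ! 0) \<longleftrightarrow> even m)" if "m < ?n" for m
    using that by (induction m) (auto simp: arc)
  have "R (cs ! (?n - 1)) (cs ! 0)" using dicycle_arc[OF cyc, of "?n - 1"] n by simp
  then have "P (cs ! (?n - 1)) \<longleftrightarrow> \<not> P (cs ! 0)" using alt n by simp
  then show ?thesis using parity[of "?n - 1"] n by simp blast
qed

lemma orientation_dicycle_length_ge_3:
  assumes "simple_graph V E" "orientation V E A" "dicycle A cs"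
  shows "length cs \<ge> 3"
proof (rule ccontr)
  assume "\<not> length cs \<ge> 3"
  moreover have "length cs \<noteq> 0" using assms(3) by (simp add: dicycle_def)
  ultimately consider "length cs = 1" | "length cs = 2" by linarith
  then show False
  proof cases
    case 1
    then have "A (cs ! 0) (cs ! 0)" using dicycle_arc[OF assms(3), of 0] by simp
    then show False using assms(1,2) by (auto simp: simple_graph_def orientation_def)
  next
    case 2
    then have "A (cs ! 0) (cs ! 1)" "A (cs ! 1) (cs ! 0)"
      using dicycle_arc[OF assms(3), of 0] dicycle_arc[OF assms(3), of 1] by simp_all
    then show False using assms(2) by (auto simp: orientation_def)
  qed
qed

lemma shortest_dicycle_induced_cycle:
  assumes G: "simple_graph V E" and O: "orientation V E A"
    and cyc: "dicycle A cs" and "set cs \<subseteq> V"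
    and shortest: "\<And>cs'. dicycle A cs' \<Longrightarrow> set cs' \<subseteq> set cs \<Longrightarrow> length cs \<le> length cs'"
  shows "induced_cycle V E cs"
  unfolding induced_cycle_def
proof (intro conjI allI impI)
  show "3 \<le> length cs" using orientation_dicycle_length_ge_3[OF G O cyc] .
  show "distinct cs" using cyc by (simp add: dicycle_def)
  show "set cs \<subseteq> V" by fact
  fix i j assume i: "i < length cs" and j: "j < length cs"
  have arc_edge: "E u v" if "A u v" for u v using O that by (simp add: orientation_def)
  have chord_is_arc: "j = Suc i mod length cs" if "A (cs ! i) (cs ! j)" "i < length cs"
    "j < length cs" "i \<noteq> j" for i j
    using dicycle_shortcut[OF cyc refl that(2,3,4,1)] shortest by fastforce
  show "E (cs ! i) (cs ! j) \<longleftrightarrow> (j = (i + 1) mod length cs \<or> i = (j + 1) mod length cs)"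
  proof
    assume e: "E (cs ! i) (cs ! j)"
    then have "i \<noteq> j" using G by (auto simp: simple_graph_def)
    moreover have "A (cs ! i) (cs ! j) \<or> A (cs ! j) (cs ! i)"
      using O e by (auto simp: orientation_def)
    ultimately show "j = (i + 1) mod length cs \<or> i = (j + 1) mod length cs"
      using chord_is_arc i j by auto
  next
    assume "j = (i + 1) mod length cs \<or> i = (j + 1) mod length cs"
    then show "E (cs ! i) (cs ! j)"
      using dicycle_arc[OF cyc] arc_edge i j G by (auto simp: simple_graph_def)
  qed
qed

lemma kernels_symdiff_arc_alternates:
  assumes "kernel V A S" "kernel V A T" "u \<in> sym_diff S T" "v \<in> sym_diff S T" "A u v"
  shows "u \<in> S \<longleftrightarrow> v \<notin> S"
  using assms unfolding kernel_def by blast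

lemma kernels_symdiff_out_closed:
  assumes "kernel V A S" "kernel V A T"
  shows "\<forall>u \<in> sym_diff S T. \<exists>v \<in> sym_diff S T. A u v"
proof
  fix u assume u: "u \<in> sym_diff S T"
  \<comment> \<open>u is absorbed by the kernel it avoids, and that arc cannot end in the kernel u lies in\<close>
  show "\<exists>v \<in> sym_diff S T. A u v"
  proof (cases "u \<in> S")
    case True
    then obtain v where "v \<in> T" "A u v" using assms u unfolding kernel_def by blast
    then show ?thesis using assms True unfolding kernel_def by blast
  next
    case False
    then obtain v where "v \<in> S" "A u v" using assms u unfolding kernel_def by blast
    then show ?thesis using assms False u unfolding kernel_def by blast
  qed
qed

theorem proposition3:
  fixes V :: "'a set" and E A :: "'a \<Rightarrow> 'a \<Rightarrow> bool" and S T :: "'a set"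
  assumes "simple_graph V E" and "chordal V E" and "orientation V E A"
    and "kernel V A S" and "kernel V A T"
  shows "S = T"
proof (rule ccontr)
  assume "S \<noteq> T"
  define D where "D = sym_diff S T"
  have "D \<subseteq> V" using assms(4,5) by (auto simp: D_def kernel_def)
  then have "finite D" using assms(1) finite_subset by (auto simp: simple_graph_def)
  obtain x where "x \<in> D" using \<open>S \<noteq> T\<close> by (auto simp: D_def)
  obtain cs0 where "dicycle A cs0 \<and> set cs0 \<subseteq> D"
    using finite_out_closed_has_dicycle[OF \<open>finite D\<close> \<open>x \<in> D\<close>
      kernels_symdiff_out_closed[OF assms(4,5), folded D_def]] by blast
  then obtain cs where cs: "dicycle A cs" "set cs \<subseteq> D"
    and shortest: "\<And>cs'. dicycle A cs' \<and> set cs' \<subseteq> D \<Longrightarrow> length cs \<le> length cs'"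
    using ex_has_least_nat[of "\<lambda>cs. dicycle A cs \<and> set cs \<subseteq> D" cs0 length] by blast
  have "induced_cycle V E cs"
    using shortest_dicycle_induced_cycle[OF assms(1,3) cs(1)] cs(2) \<open>D \<subseteq> V\<close> shortest by blast
  moreover have "even (length cs)"
  proof (rule dicycle_alternating_even[OF cs(1), where P = "\<lambda>u. u \<in> S"])
    fix u v assume "u \<in> set cs" "v \<in> set cs" "A u v"
    then show "u \<in> S \<longleftrightarrow> v \<notin> S"
      using kernels_symdiff_arc_alternates[OF assms(4,5)] cs(2) unfolding D_def by blast
  qed
  moreover have "length cs \<ge> 3" using orientation_dicycle_length_ge_3[OF assms(1,3) cs(1)] .
  ultimately show False using assms(2) unfolding chordal_def by fastforce
qed

end
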